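(* Let $G$ be a graph on $n$ vertices, $h\geq 3$ a constant, $\Lambda>0$, and $s=\frac{1}{h^h}$. Fix a vertex $v$ with $t_G(v)\geq \Lambda\cdot (2h\log n)^{(h-1)^2}\cdot 2/s$. Then there exists a vector $P\in\mathsf{Product}_h(\Lambda)$ such that $v[P]\geq (1-1/e)^{h-1}\cdot s$.
   Context: An $h$-cycle is a cycle on $h$ distinct vertices; $t_G(v)$ is the number of $h$-cycles of $G$ containing $v$. Logarithms are base 2. $\mathsf{Product}_h(\Lambda)$ is the set of vectors $(p_1,\dots,p_h)\in[0,1]^h$ such that each $p_i\in\{2^{-j}: j \text{ an integer}, 0\leq j\leq \log(\Lambda)+1\}$ and $\prod_{i=1}^h p_i\leq 1/\Lambda$. For $P=(p_1,\dots,p_h)$, the $P$-discovery experiment is: sample a uniformly random coloring $\varphi:V(G)\to[h]$, keep each vertex of color class $i$ independently with probability $p_i$, and let $F$ be the induced subgraph on kept vertices; $v$ is $P$-discovered if $v$ lies on an $h$-cycle of $F$ whose vertices receive $h$ distinct colors. $v[P]$ is the probability that $v$ is $P$-discovered. *)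

theory Defs
  imports Complex_Main "HOL-Library.FuncSet"
begin

text \<open>Graphs: finite vertex set V, symmetric irreflexive adjacency E.
  An h-cycle is given by a list of h distinct vertices, consecutive ones
  (cyclically) adjacent; the cycle itself is its edge set.\<close>

definition cycle_list :: "('a \<Rightarrow> 'a \<Rightarrow> bool) \<Rightarrow> 'a set \<Rightarrow> nat \<Rightarrow> 'a list \<Rightarrow> bool" where
  "cycle_list E V h xs \<longleftrightarrow> length xs = h \<and> distinct xs \<and> set xs \<subseteq> V \<and>
     (\<forall>i<h. E (xs ! i) (xs ! ((i + 1) mod h)))"

definition cycle_edges :: "'a list \<Rightarrow> 'a set set" where
  "cycle_edges xs = {{xs ! i, xs ! ((i + 1) mod length xs)} | i. i < length xs}"

definition h_cycles :: "('a \<Rightarrow> 'a \<Rightarrow> bool) \<Rightarrow> 'a set \<Rightarrow> nat \<Rightarrow> 'a set set set" where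
  "h_cycles E V h = cycle_edges ` {xs. cycle_list E V h xs}"

definition t_count :: "('a \<Rightarrow> 'a \<Rightarrow> bool) \<Rightarrow> 'a set \<Rightarrow> nat \<Rightarrow> 'a \<Rightarrow> nat" where
  "t_count E V h v = card {C \<in> h_cycles E V h. v \<in> \<Union>C}"

definition Product :: "nat \<Rightarrow> real \<Rightarrow> real list set" where
  "Product h \<Lambda> = {p. length p = h \<and>
      (\<forall>i<h. \<exists>j::nat. real j \<le> log 2 \<Lambda> + 1 \<and> p ! i = (1/2) ^ j) \<and>
      prod_list p \<le> 1 / \<Lambda>}"

definition discovered :: "('a \<Rightarrow> 'a \<Rightarrow> bool) \<Rightarrow> nat \<Rightarrow> ('a \<Rightarrow> nat) \<Rightarrow> 'a set \<Rightarrow> 'a \<Rightarrow> bool" where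
  "discovered E h \<phi> S v \<longleftrightarrow>
     (\<exists>xs. cycle_list E S h xs \<and> v \<in> set xs \<and> inj_on \<phi> (set xs))"

text \<open>v[P]: probability of discovery; uniform colouring V -> {0..<h}, then each vertex
  of colour i kept independently with probability p!i.\<close>
definition disc_prob :: "('a \<Rightarrow> 'a \<Rightarrow> bool) \<Rightarrow> 'a set \<Rightarrow> nat \<Rightarrow> real list \<Rightarrow> 'a \<Rightarrow> real" where
  "disc_prob E V h p v =
     (\<Sum>\<phi> \<in> V \<rightarrow>\<^sub>E {0..<h}. \<Sum>S \<in> Pow V.
        (1 / real h ^ card V) * (\<Prod>u\<in>S. p ! \<phi> u) * (\<Prod>u\<in>V - S. 1 - p ! \<phi> u) *
        (if discovered E h \<phi> S v then 1 else 0))"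

end

theory Submission
  imports Defs
begin

text \<open>Run the discovery experiment by giving every vertex \<open>u\<close> an independent pair
  \<open>\<psi> u = (colour, kept)\<close>. Then \<open>v\<close> is discovered as soon as some \<open>h\<close>-cycle through \<open>v\<close>,
  listed as \<open>x\<^sub>0, ..., x\<^sub>h\<^sub>-\<^sub>1\<close>, has every \<open>x\<^sub>j\<close> kept and coloured \<open>j\<close>.

  A dyadic pigeonhole over these lists (with \<open>2^M \<le> n < 2^(M+1)\<close>) yields exponents
  \<open>e\<^sub>j \<le> M\<close> and a tree inside them: at least \<open>2^e\<^sub>0\<close> choices of \<open>x\<^sub>0\<close>, each extending in
  at least \<open>2^e\<^sub>1\<close> ways to \<open>x\<^sub>1\<close>, and so on, while \<open>t(v) \<le> 2^h (M+1)^((h-1)\<^sup>2) 2^(\<Sum>e\<^sub>j)\<close>.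
  The hypothesis on \<open>t(v)\<close> then forces \<open>\<Lambda> \<le> 2^(\<Sum>e\<^sub>j)\<close>, so lowering the exponents to
  \<open>e'\<^sub>j\<close> with \<open>\<Sum>e'\<^sub>j = \<lceil>log \<Lambda>\<rceil>\<close> gives \<open>P = (2^-e'\<^sub>j)\<close> in \<open>Product\<^sub>h(\<Lambda>)\<close> together with a tree
  of degrees \<open>2^e'\<^sub>j\<close>.

  In such a tree the event has probability at least \<open>\<Prod>\<^sub>j (1 - (1 - p\<^sub>j/h)^(2^e'\<^sub>j))\<close>: level by
  level, conditioning a vertex to miss its target value only raises the probabilities of all
  other values, so the failures along different branches are no worse than independent
  trials. Each factor is at least \<open>(1 - 1/(2h))/h\<close>, and
  \<open>((1 - 1/(2h))/h)^h \<ge> 1/(2h^h) \<ge> (1 - 1/e)^(h-1)/h^h\<close>.\<close>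

section \<open>Finite product measures\<close>

definition prob_weights :: "'a set \<Rightarrow> 'b set \<Rightarrow> ('a \<Rightarrow> 'b \<Rightarrow> real) \<Rightarrow> bool" where
  "prob_weights V Om \<rho> \<longleftrightarrow> (\<forall>u\<in>V. (\<forall>x\<in>Om. 0 \<le> \<rho> u x) \<and> sum (\<rho> u) Om = 1)"

definition prod_prob :: "'a set \<Rightarrow> 'b set \<Rightarrow> ('a \<Rightarrow> 'b \<Rightarrow> real) \<Rightarrow> (('a \<Rightarrow> 'b) \<Rightarrow> bool) \<Rightarrow> real" where
  "prod_prob V Om \<rho> P = (\<Sum>\<psi> \<in> V \<rightarrow>\<^sub>E Om. (\<Prod>u\<in>V. \<rho> u (\<psi> u)) * (if P \<psi> then 1 else 0))"

text \<open>The law of \<open>\<psi> a\<close> conditioned on \<open>\<psi> a \<noteq> t\<close>.\<close>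
definition cond_avoid :: "('a \<Rightarrow> 'b \<Rightarrow> real) \<Rightarrow> 'a \<Rightarrow> 'b \<Rightarrow> 'a \<Rightarrow> 'b \<Rightarrow> real" where
  "cond_avoid \<rho> a t = \<rho>(a := (\<lambda>x. if x = t then 0 else \<rho> a x / (1 - \<rho> a t)))"

lemma prod_prob_insert:
  assumes "finite V" "a \<notin> V"
  shows "prod_prob (insert a V) Om \<rho> P = (\<Sum>y\<in>Om. \<rho> a y * prod_prob V Om \<rho> (\<lambda>\<psi>. P (\<psi>(a := y))))"
proof -
  have prod_upd: "(\<Prod>u\<in>insert a V. \<rho> u ((\<psi>(a := y)) u)) = \<rho> a y * (\<Prod>u\<in>V. \<rho> u (\<psi> u))" for \<psi> y
  proof -
    have "(\<Prod>u\<in>V. \<rho> u ((\<psi>(a := y)) u)) = (\<Prod>u\<in>V. \<rho> u (\<psi> u))"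
      using assms by (intro prod.cong) auto
    then show ?thesis using assms by simp
  qed
  have "prod_prob (insert a V) Om \<rho> P =
      (\<Sum>(y, \<psi>) \<in> Om \<times> (V \<rightarrow>\<^sub>E Om). (\<Prod>u\<in>insert a V. \<rho> u ((\<psi>(a := y)) u)) * (if P (\<psi>(a := y)) then 1 else 0))"
    unfolding prod_prob_def PiE_insert_eq
    by (subst sum.reindex[OF inj_combinator[OF assms(2)]]) (simp add: case_prod_unfold)
  also have "\<dots> = (\<Sum>y\<in>Om. \<rho> a y * prod_prob V Om \<rho> (\<lambda>\<psi>. P (\<psi>(a := y))))"
    unfolding prod_upd prod_prob_def
    by (simp add: sum.cartesian_product[symmetric] sum_distrib_left mult.assoc)
  finally show ?thesis .
qed

lemma prod_prob_nonneg:
  assumes "prob_weights V Om \<rho>"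
  shows "0 \<le> prod_prob V Om \<rho> P"
  using assms unfolding prod_prob_def prob_weights_def
  by (intro sum_nonneg mult_nonneg_nonneg prod_nonneg) (auto simp: PiE_def Pi_def)

lemma prod_prob_mono:
  assumes "prob_weights V Om \<rho>" "\<And>\<psi>. \<psi> \<in> V \<rightarrow>\<^sub>E Om \<Longrightarrow> P \<psi> \<Longrightarrow> P' \<psi>"
  shows "prod_prob V Om \<rho> P \<le> prod_prob V Om \<rho> P'"
  unfolding prod_prob_def
proof (rule sum_mono)
  fix \<psi> assume \<psi>: "\<psi> \<in> V \<rightarrow>\<^sub>E Om"
  then have "0 \<le> (\<Prod>u\<in>V. \<rho> u (\<psi> u))"
    using assms(1) unfolding prob_weights_def by (intro prod_nonneg) auto
  then show "(\<Prod>u\<in>V. \<rho> u (\<psi> u)) * (if P \<psi> then 1 else 0) \<le> (\<Prod>u\<in>V. \<rho> u (\<psi> u)) * (if P' \<psi> then 1 else 0)"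
    using assms(2)[OF \<psi>] by auto
qed

lemma prod_prob_split:
  "prod_prob V Om \<rho> P = prod_prob V Om \<rho> (\<lambda>\<psi>. Q \<psi> \<and> P \<psi>) + prod_prob V Om \<rho> (\<lambda>\<psi>. \<not> Q \<psi> \<and> P \<psi>)"
  unfolding prod_prob_def by (simp add: sum.distrib[symmetric]) (intro sum.cong, auto)

lemma prod_prob_True:
  assumes "finite V" "prob_weights V Om \<rho>"
  shows "prod_prob V Om \<rho> (\<lambda>_. True) = 1"
  using assms
proof (induction V rule: finite_induct)
  case empty
  then show ?case by (simp add: prod_prob_def)
next
  case (insert a V)
  then have "prob_weights V Om \<rho>" "sum (\<rho> a) Om = 1"
    unfolding prob_weights_def by auto
  with insert show ?case by (simp add: prod_prob_insert)
qed

lemma prod_prob_coord_eq: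
  assumes "finite V" "finite Om" "prob_weights V Om \<rho>" "a \<in> V" "y \<in> Om"
    and indep: "\<And>\<psi> x. G (\<psi>(a := x)) = G \<psi>"
  shows "prod_prob V Om \<rho> (\<lambda>\<psi>. \<psi> a = y \<and> G \<psi>) = \<rho> a y * prod_prob V Om \<rho> G"
proof -
  have V: "V = insert a (V - {a})" and fV: "finite (V - {a})"
    using assms by auto
  have "prod_prob V Om \<rho> (\<lambda>\<psi>. \<psi> a = y \<and> G \<psi>) = (\<Sum>z\<in>Om. \<rho> a z * prod_prob (V - {a}) Om \<rho> (\<lambda>\<psi>. z = y \<and> G \<psi>))"
    by (subst V, subst prod_prob_insert) (use fV indep in auto)
  also have "\<dots> = (\<Sum>z\<in>Om. if z = y then \<rho> a y * prod_prob (V - {a}) Om \<rho> G else 0)"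
    by (intro sum.cong) (auto simp: prod_prob_def)
  also have "\<dots> = \<rho> a y * prod_prob (V - {a}) Om \<rho> G"
    using assms(2,5) by simp
  also have "prod_prob (V - {a}) Om \<rho> G = (\<Sum>z\<in>Om. \<rho> a z * prod_prob (V - {a}) Om \<rho> G)"
    using assms(3,4) by (simp add: sum_distrib_right[symmetric] prob_weights_def)
  also have "\<dots> = prod_prob V Om \<rho> G"
    by (subst (2) V, subst prod_prob_insert) (use fV indep in auto)
  finally show ?thesis .
qed

lemma prod_prob_coord_neq:
  assumes "finite V" "a \<in> V" "\<rho> a t \<noteq> 1"
  shows "prod_prob V Om \<rho> (\<lambda>\<psi>. \<psi> a \<noteq> t \<and> P \<psi>) = (1 - \<rho> a t) * prod_prob V Om (cond_avoid \<rho> a t) P"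
  unfolding prod_prob_def sum_distrib_left
proof (intro sum.cong refl)
  fix \<psi>
  have "(\<Prod>u\<in>V. \<rho> u (\<psi> u)) = \<rho> a (\<psi> a) * (\<Prod>u\<in>V - {a}. \<rho> u (\<psi> u))"
    and "(\<Prod>u\<in>V. cond_avoid \<rho> a t u (\<psi> u)) = cond_avoid \<rho> a t a (\<psi> a) * (\<Prod>u\<in>V - {a}. \<rho> u (\<psi> u))"
    using assms by (simp_all add: prod.remove cond_avoid_def)
  with assms(3) show "(\<Prod>u\<in>V. \<rho> u (\<psi> u)) * (if \<psi> a \<noteq> t \<and> P \<psi> then 1 else 0) =
      (1 - \<rho> a t) * ((\<Prod>u\<in>V. cond_avoid \<rho> a t u (\<psi> u)) * (if P \<psi> then 1 else 0))"
    by (auto simp: cond_avoid_def)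
qed

lemma prob_weights_le_one:
  assumes "finite Om" "prob_weights V Om \<rho>" "a \<in> V" "t \<in> Om"
  shows "\<rho> a t \<le> 1"
proof -
  have "\<rho> a t \<le> sum (\<rho> a) Om"
    using assms by (intro member_le_sum) (auto simp: prob_weights_def)
  then show ?thesis using assms by (auto simp: prob_weights_def)
qed

lemma prob_weights_cond_avoid:
  assumes "finite Om" "prob_weights V Om \<rho>" "a \<in> V" "t \<in> Om" "\<rho> a t < 1"
  shows "prob_weights V Om (cond_avoid \<rho> a t)"
proof -
  have "sum (\<rho> a) Om = \<rho> a t + sum (\<rho> a) (Om - {t})" "sum (\<rho> a) Om = 1"
    using assms by (simp_all add: sum.remove prob_weights_def)
  then have "sum (cond_avoid \<rho> a t a) Om = 1"
    using assms by (simp add: sum.remove cond_avoid_def sum_divide_distrib[symmetric])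
  then show ?thesis using assms unfolding prob_weights_def cond_avoid_def by auto
qed

lemma prod_prob_coord_eq_ge:
  assumes "finite V" "finite Om" "prob_weights V Om \<rho>" "a \<in> V" "t \<in> Om"
    and "\<And>\<psi> x. G (\<psi>(a := x)) = G \<psi>" "c \<le> prod_prob V Om \<rho> G"
  shows "\<rho> a t * c \<le> prod_prob V Om \<rho> (\<lambda>\<psi>. \<psi> a = t \<and> G \<psi>)"
proof -
  have "0 \<le> \<rho> a t" using assms(3-5) by (auto simp: prob_weights_def)
  then show ?thesis
    using prod_prob_coord_eq[OF assms(1-6)] assms(7) by (simp add: mult_left_mono)
qed

lemma prod_prob_coord_neq_ge:
  assumes "finite V" "finite Om" "prob_weights V Om \<rho>" "a \<in> V" "t \<in> Om"
    and "\<rho> a t < 1 \<Longrightarrow> c \<le> prod_prob V Om (cond_avoid \<rho> a t) P"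
  shows "(1 - \<rho> a t) * c \<le> prod_prob V Om \<rho> (\<lambda>\<psi>. \<psi> a \<noteq> t \<and> P \<psi>)"
proof (cases "\<rho> a t < 1")
  case True
  then have "(1 - \<rho> a t) * c \<le> (1 - \<rho> a t) * prod_prob V Om (cond_avoid \<rho> a t) P"
    using assms(6) by (intro mult_left_mono) auto
  also have "\<dots> = prod_prob V Om \<rho> (\<lambda>\<psi>. \<psi> a \<noteq> t \<and> P \<psi>)"
    using True by (intro prod_prob_coord_neq[OF assms(1,4), symmetric]) simp
  finally show ?thesis .
next
  case False
  then have "\<rho> a t = 1" using prob_weights_le_one[OF assms(2-5)] by simp
  then show ?thesis using prod_prob_nonneg[OF assms(3)] by simp
qed

lemma le_cond_avoid:
  assumes "prob_weights V Om \<rho>" "a \<in> V" "t \<in> Om" "s \<in> Om" "s \<noteq> t" "\<rho> a t < 1"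
  shows "\<rho> u s \<le> cond_avoid \<rho> a t u s"
proof (cases "u = a")
  case True
  have "0 \<le> \<rho> a s" "0 \<le> \<rho> a t" using assms by (auto simp: prob_weights_def)
  then have "\<rho> a s \<le> \<rho> a s / (1 - \<rho> a t)"
    using assms(6) by (simp add: le_divide_eq mult_left_le)
  with True assms(5) show ?thesis by (simp add: cond_avoid_def)
qed (simp add: cond_avoid_def)

section \<open>Hitting target values along a branching family\<close>

definition lower_bounded :: "'a set \<Rightarrow> 'b set \<Rightarrow> ('b \<Rightarrow> real) \<Rightarrow> ('a \<Rightarrow> 'b \<Rightarrow> real) \<Rightarrow> bool" where
  "lower_bounded V S r \<rho> \<longleftrightarrow> (\<forall>s\<in>S. \<forall>u\<in>V. r s \<le> \<rho> u s)"

lemma lower_bounded_cond_avoid: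
  assumes "S \<subseteq> Om" "t \<in> Om" "t \<notin> S"
    and "prob_weights V Om \<rho>" "lower_bounded V S r \<rho>" "a \<in> V" "\<rho> a t < 1"
  shows "lower_bounded V S r (cond_avoid \<rho> a t)"
  unfolding lower_bounded_def
proof (intro ballI)
  fix s u assume "s \<in> S" "u \<in> V"
  moreover have "s \<in> Om" "s \<noteq> t" using \<open>s \<in> S\<close> assms(1,3) by auto
  ultimately have "r s \<le> \<rho> u s" "\<rho> u s \<le> cond_avoid \<rho> a t u s"
    using assms(5) le_cond_avoid[OF assms(4,6,2) _ _ assms(7)] unfolding lower_bounded_def by auto
  then show "r s \<le> cond_avoid \<rho> a t u s" by linarith
qed

lemma hit_probability_step:
  fixes \<beta> q r :: real
  assumes "0 \<le> \<beta>" "r \<le> q" "r \<le> 1"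
  shows "\<beta> * (1 - (1 - r) ^ Suc k) \<le> q * \<beta> + (1 - q) * (\<beta> * (1 - (1 - r) ^ k))"
proof -
  have "q * \<beta> + (1 - q) * (\<beta> * (1 - (1 - r) ^ k)) - \<beta> * (1 - (1 - r) ^ Suc k) = \<beta> * (1 - r) ^ k * (q - r)"
    by (simp add: algebra_simps)
  moreover have "0 \<le> \<beta> * (1 - r) ^ k * (q - r)"
    using assms by simp
  ultimately show ?thesis by linarith
qed

text \<open>The events \<open>G a\<close> may be correlated for different \<open>a\<close>; what makes the bound work is
  that \<open>Adm\<close>, and with it the lower bound \<open>\<beta>\<close> on each \<open>G a\<close>, survives conditioning a
  coordinate to avoid \<open>t\<close>.\<close>
lemma prod_prob_exists_hit_ge:
  assumes "finite V" "finite Om" "t \<in> Om" "0 \<le> \<beta>" "0 \<le> r" "r \<le> 1"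
    and Adm_cond: "\<And>\<rho> a. prob_weights V Om \<rho> \<Longrightarrow> Adm \<rho> \<Longrightarrow> a \<in> V \<Longrightarrow> \<rho> a t < 1 \<Longrightarrow> Adm (cond_avoid \<rho> a t)"
    and "finite A" "A \<subseteq> V"
    and "\<And>a \<psi> x. a \<in> A \<Longrightarrow> G a (\<psi>(a := x)) = G a \<psi>"
    and "\<And>a \<rho>. a \<in> A \<Longrightarrow> prob_weights V Om \<rho> \<Longrightarrow> Adm \<rho> \<Longrightarrow> \<beta> \<le> prod_prob V Om \<rho> (G a)"
    and "prob_weights V Om \<rho>" "Adm \<rho>" "\<And>u. u \<in> A \<Longrightarrow> r \<le> \<rho> u t"
  shows "\<beta> * (1 - (1 - r) ^ card A) \<le> prod_prob V Om \<rho> (\<lambda>\<psi>. \<exists>a\<in>A. \<psi> a = t \<and> G a \<psi>)"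
  using assms(8-)
proof (induction A arbitrary: \<rho> rule: finite_induct)
  case empty
  then show ?case by (simp add: prod_prob_nonneg)
next
  case (insert a A)
  let ?hit = "\<lambda>A \<psi>. \<exists>a'\<in>A. \<psi> a' = t \<and> G a' \<psi>"
  have a: "a \<in> V" and "r \<le> \<rho> a t" using insert.prems(1,6) by auto
  have "G a (\<psi>(a := x)) = G a \<psi>" for \<psi> x using insert.prems(2) by blast
  then have "\<rho> a t * \<beta> \<le> prod_prob V Om \<rho> (\<lambda>\<psi>. \<psi> a = t \<and> G a \<psi>)"
    using insert.prems(3-5) by (intro prod_prob_coord_eq_ge[OF assms(1,2) _ a assms(3)]) auto
  also have "\<dots> \<le> prod_prob V Om \<rho> (\<lambda>\<psi>. \<psi> a = t \<and> ?hit (insert a A) \<psi>)"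
    by (rule prod_prob_mono[OF insert.prems(4)]) auto
  finally have hit_a: "\<rho> a t * \<beta> \<le> \<dots>" .
  have "(1 - \<rho> a t) * (\<beta> * (1 - (1 - r) ^ card A)) \<le> prod_prob V Om \<rho> (\<lambda>\<psi>. \<psi> a \<noteq> t \<and> ?hit A \<psi>)"
  proof (rule prod_prob_coord_neq_ge[OF assms(1,2) insert.prems(4) a assms(3)])
    assume "\<rho> a t < 1"
    then have "prob_weights V Om (cond_avoid \<rho> a t)" "Adm (cond_avoid \<rho> a t)"
      using prob_weights_cond_avoid[OF assms(2) insert.prems(4) a assms(3)] Adm_cond[OF insert.prems(4,5) a]
      by auto
    moreover have "r \<le> cond_avoid \<rho> a t u t" if "u \<in> A" for u
      using that insert.prems(6) insert.hyps(2) by (auto simp: cond_avoid_def)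
    ultimately show "\<beta> * (1 - (1 - r) ^ card A) \<le> prod_prob V Om (cond_avoid \<rho> a t) (?hit A)"
      using insert.prems(1-3) by (intro insert.IH) auto
  qed
  also have "\<dots> \<le> prod_prob V Om \<rho> (\<lambda>\<psi>. \<psi> a \<noteq> t \<and> ?hit (insert a A) \<psi>)"
    by (rule prod_prob_mono[OF insert.prems(4)]) auto
  finally have miss_a: "(1 - \<rho> a t) * (\<beta> * (1 - (1 - r) ^ card A)) \<le> \<dots>" .
  have "\<beta> * (1 - (1 - r) ^ card (insert a A)) \<le> \<rho> a t * \<beta> + (1 - \<rho> a t) * (\<beta> * (1 - (1 - r) ^ card A))"
    using hit_probability_step[OF assms(4) \<open>r \<le> \<rho> a t\<close> assms(6)] insert.hyps by simp
  also have "\<dots> \<le> prod_prob V Om \<rho> (?hit (insert a A))"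
    using hit_a miss_a prod_prob_split[of V Om \<rho> "?hit (insert a A)" "\<lambda>\<psi>. \<psi> a = t"] by linarith
  finally show ?case .
qed

fun branching :: "'a set \<Rightarrow> 'a list set \<Rightarrow> nat list \<Rightarrow> bool" where
  "branching V Q [] \<longleftrightarrow> [] \<in> Q"
| "branching V Q (m # ms) \<longleftrightarrow> (\<exists>A\<subseteq>V. m \<le> card A \<and> (\<forall>a\<in>A. branching V {ys. a # ys \<in> Q} ms))"

lemma branching_mono:
  "branching V Q ms \<Longrightarrow> list_all2 (\<le>) ms' ms \<Longrightarrow> branching V Q ms'"
proof (induction ms arbitrary: Q ms')
  case Nil
  then show ?case by simp
next
  case (Cons m ms)
  then obtain m' ms'' where "ms' = m' # ms''" "m' \<le> m" "list_all2 (\<le>) ms'' ms"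
    by (cases ms') auto
  with Cons show ?case by (auto intro: le_trans)
qed

lemma prod_prob_realize_ge:
  assumes fV: "finite V" and fOm: "finite Om"
    and "\<forall>ys\<in>Q. distinct ys" "branching V Q ms" "length ms = length ts"
    and "distinct ts" "set ts \<subseteq> Om" "\<forall>t\<in>set ts. 0 \<le> r t \<and> r t \<le> 1"
    and "prob_weights V Om \<rho>" "lower_bounded V (set ts) r \<rho>"
  shows "prod_list (map2 (\<lambda>t m. 1 - (1 - r t) ^ m) ts ms) \<le> prod_prob V Om \<rho> (\<lambda>\<psi>. \<exists>ys\<in>Q. map \<psi> ys = ts)"
  using assms(3-)
proof (induction ts arbitrary: Q ms \<rho>)
  case Nil
  then have "prod_prob V Om \<rho> (\<lambda>\<psi>. \<exists>ys\<in>Q. map \<psi> ys = []) = 1"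
    using prod_prob_True[OF fV] by simp
  then show ?case by simp
next
  case (Cons t ts)
  obtain m ms' where ms: "ms = m # ms'" using Cons.prems(3) by (cases ms) auto
  obtain A where A: "A \<subseteq> V" "m \<le> card A"
    and tails: "\<And>a. a \<in> A \<Longrightarrow> branching V {ys. a # ys \<in> Q} ms'"
    using Cons.prems(2) ms by auto
  have fA: "finite A" using A(1) fV by (rule finite_subset)
  have t: "t \<in> Om" "t \<notin> set ts" "set ts \<subseteq> Om" using Cons.prems(4,5) by auto
  have r: "0 \<le> r t" "r t \<le> 1" "\<And>u. u \<in> A \<Longrightarrow> r t \<le> \<rho> u t"
    using Cons.prems(6,8) A(1) by (auto simp: lower_bounded_def)
  have "lower_bounded V (set ts) r \<rho>"
    using Cons.prems(8) by (simp add: lower_bounded_def)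
  define \<beta> where "\<beta> = prod_list (map2 (\<lambda>t m. 1 - (1 - r t) ^ m) ts ms')"
  have \<beta>: "0 \<le> \<beta>"
    unfolding \<beta>_def using Cons.prems(6)
    by (intro prod_list_nonneg) (auto simp: power_le_one dest!: set_zip_leftD)
  have tails_ge: "\<beta> \<le> prod_prob V Om \<rho>' (\<lambda>\<psi>. \<exists>ys\<in>{ys. a # ys \<in> Q}. map \<psi> ys = ts)"
    if "a \<in> A" "prob_weights V Om \<rho>'" "lower_bounded V (set ts) r \<rho>'" for a \<rho>'
    unfolding \<beta>_def using Cons.prems ms that tails[OF that(1)] by (intro Cons.IH) auto
  have indep: "(\<exists>ys\<in>{ys. a # ys \<in> Q}. map (\<psi>(a := x)) ys = ts) \<longleftrightarrow> (\<exists>ys\<in>{ys. a # ys \<in> Q}. map \<psi> ys = ts)"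
    for a \<psi> x
  proof -
    have "map (\<psi>(a := x)) ys = map \<psi> ys" if "a # ys \<in> Q" for ys
      using Cons.prems(1) that by force
    then show ?thesis by auto
  qed
  have "\<beta> * (1 - (1 - r t) ^ card A)
      \<le> prod_prob V Om \<rho> (\<lambda>\<psi>. \<exists>a\<in>A. \<psi> a = t \<and> (\<exists>ys\<in>{ys. a # ys \<in> Q}. map \<psi> ys = ts))"
    by (rule prod_prob_exists_hit_ge[OF fV fOm t(1) \<beta> r(1,2) lower_bounded_cond_avoid[OF t(3,1,2)]
          fA A(1) indep tails_ge Cons.prems(7) \<open>lower_bounded V (set ts) r \<rho>\<close> r(3)])
  also have "\<dots> \<le> prod_prob V Om \<rho> (\<lambda>\<psi>. \<exists>ys\<in>Q. map \<psi> ys = t # ts)"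
    by (rule prod_prob_mono[OF Cons.prems(7)]) (metis list.simps(9) mem_Collect_eq)
  finally have "\<beta> * (1 - (1 - r t) ^ card A) \<le> \<dots>" .
  moreover have "(1 - (1 - r t) ^ m) * \<beta> \<le> \<beta> * (1 - (1 - r t) ^ card A)"
    using \<beta> A(2) r by (simp add: mult.commute mult_left_mono power_decreasing)
  ultimately show ?case by (simp add: ms \<beta>_def)
qed

section \<open>A dyadic pigeonhole for families of lists\<close>

lemma exists_heavy_fibre:
  fixes w :: "'a \<Rightarrow> nat"
  assumes "finite X" "finite L" "L \<noteq> {}" "F ` X \<subseteq> L"
  shows "\<exists>b\<in>L. sum w X \<le> card L * sum w {a\<in>X. F a = b}"
proof -
  let ?S = "\<lambda>b. sum w {a\<in>X. F a = b}"
  have "Max (?S ` L) \<in> ?S ` L"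
    using assms(2,3) by (intro Max_in) auto
  then obtain b where b: "b \<in> L" "?S b = Max (?S ` L)"
    by auto
  have "sum w X = (\<Sum>b\<in>L. ?S b)"
    using sum.group[OF assms(1,2,4), of w] by simp
  also have "\<dots> \<le> card L * ?S b"
  proof -
    have "?S b' \<le> ?S b" if "b' \<in> L" for b'
      using b(2) assms(2) that by simp
    then show ?thesis using sum_bounded_above[of L ?S "?S b"] by simp
  qed
  finally show ?thesis using b(1) by blast
qed

lemma card_eq_sum_tails:
  assumes "finite Q" "[] \<notin> Q"
  shows "card Q = (\<Sum>a\<in>hd ` Q. card {ys. a # ys \<in> Q})"
proof -
  have "card Q = (\<Sum>a\<in>hd ` Q. card {xs\<in>Q. hd xs = a})"
    using sum.group[OF assms(1) finite_imageI[OF assms(1)], where g = hd and h = "\<lambda>_. 1::nat"] by simp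
  also have "\<dots> = (\<Sum>a\<in>hd ` Q. card {ys. a # ys \<in> Q})"
  proof (intro sum.cong refl)
    fix a
    have "{xs\<in>Q. hd xs = a} = (#) a ` {ys. a # ys \<in> Q}"
      using assms(2) by (auto simp: image_iff) (metis list.collapse)
    then show "card {xs\<in>Q. hd xs = a} = card {ys. a # ys \<in> Q}"
      by (simp add: card_image)
  qed
  finally show ?thesis .
qed

lemma lists_Suc_hd_tails:
  assumes "\<forall>xs\<in>Q. length xs = Suc k \<and> set xs \<subseteq> V" "a \<in> hd ` Q"
  shows "a \<in> V" "{ys. a # ys \<in> Q} \<noteq> {}" "\<forall>ys\<in>{ys. a # ys \<in> Q}. length ys = k \<and> set ys \<subseteq> V"
proof -
  obtain xs where xs: "xs \<in> Q" "a = hd xs" using assms(2) by auto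
  with assms(1) have xs_eq: "xs = a # tl xs" and "set xs \<subseteq> V" by (auto simp: length_Suc_conv)
  then show "a \<in> V" by (metis list.set_intros(1) subsetD)
  have "tl xs \<in> {ys. a # ys \<in> Q}" using xs(1) xs_eq by simp
  then show "{ys. a # ys \<in> Q} \<noteq> {}" by blast
  show "\<forall>ys\<in>{ys. a # ys \<in> Q}. length ys = k \<and> set ys \<subseteq> V"
  proof
    fix ys assume "ys \<in> {ys. a # ys \<in> Q}"
    then have "length (a # ys) = Suc k \<and> set (a # ys) \<subseteq> V" using assms(1) by blast
    then show "length ys = k \<and> set ys \<subseteq> V" by simp
  qed
qed

lemma exists_dyadic_scale:
  assumes "finite X" "X \<noteq> {}" "card X < 2 ^ Suc M"
  shows "\<exists>e\<le>M. 2 ^ e \<le> card X \<and> card X < 2 ^ Suc e"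
proof -
  obtain e where e: "2 ^ e \<le> card X" "card X < 2 ^ Suc e"
    using ex_power_ivl1[of 2 "card X"] assms(1,2) by (auto simp: Suc_le_eq card_gt_0_iff)
  have "e \<le> M"
    using e(1) assms(3) power_less_imp_less_exp[of "2::nat" e "Suc M"] by simp
  with e show ?thesis by blast
qed

lemma dyadic_count_step:
  fixes M k e s :: nat
  shows "(M + 1) ^ k * (2 ^ Suc e * (2 ^ k * (M + 1) ^ ((k - 1)\<^sup>2) * 2 ^ s))
    \<le> 2 ^ Suc k * (M + 1) ^ ((Suc k - 1)\<^sup>2) * 2 ^ (e + s)"
proof -
  have "k + (k - 1)\<^sup>2 \<le> k\<^sup>2" by (cases k) (simp_all add: power2_eq_square)
  then have "(M + 1) ^ (k + (k - 1)\<^sup>2) \<le> (M + 1) ^ ((Suc k - 1)\<^sup>2)"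
    by (intro power_increasing) auto
  then show ?thesis
    by (simp add: power_add mult_ac)
qed

lemma exists_dyadic_branching:
  assumes fV: "finite V" and card_V: "card V < 2 ^ Suc M"
  shows "Q \<noteq> {} \<Longrightarrow> \<forall>ys\<in>Q. length ys = k \<and> set ys \<subseteq> V \<Longrightarrow>
    \<exists>es. length es = k \<and> set es \<subseteq> {..M} \<and> branching V Q (map ((^) 2) es) \<and>
      card Q \<le> 2 ^ k * (M + 1) ^ ((k - 1)\<^sup>2) * 2 ^ sum_list es"
proof (induction k arbitrary: Q)
  case 0
  then have "Q = {[]}" by fastforce
  then show ?case by simp
next
  case (Suc k)
  define tails where "tails a = {ys. a # ys \<in> Q}" for a
  define C where "C = 2 ^ k * (M + 1) ^ ((k - 1)\<^sup>2)"
  have fQ: "finite Q"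
    by (rule finite_subset[OF _ finite_lists_length_eq[OF fV, of "Suc k"]]) (use Suc.prems(2) in auto)
  note hd_tails = lists_Suc_hd_tails[OF Suc.prems(2), folded tails_def]
  have "\<exists>es. length es = k \<and> set es \<subseteq> {..M} \<and> branching V (tails a) (map ((^) 2) es) \<and>
      card (tails a) \<le> C * 2 ^ sum_list es" if "a \<in> hd ` Q" for a
    unfolding C_def using hd_tails(2,3)[OF that] by (rule Suc.IH)
  then obtain F where F: "\<And>a. a \<in> hd ` Q \<Longrightarrow> length (F a) = k \<and> set (F a) \<subseteq> {..M} \<and>
      branching V (tails a) (map ((^) 2) (F a)) \<and> card (tails a) \<le> C * 2 ^ sum_list (F a)"
    by metis
  define L where "L = {es. set es \<subseteq> {..M} \<and> length es = k}"
  have L: "finite L" "L \<noteq> {}" "card L = (M + 1) ^ k" "F ` hd ` Q \<subseteq> L"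
    using F by (auto simp: L_def finite_lists_length_eq card_lists_length_eq intro!: exI[of _ "replicate k 0"])
  have "card Q = (\<Sum>a\<in>hd ` Q. card (tails a))"
    unfolding tails_def using Suc.prems(2) by (intro card_eq_sum_tails[OF fQ]) auto
  then obtain b where "b \<in> L" and b: "card Q \<le> (M + 1) ^ k * (\<Sum>a\<in>{a\<in>hd ` Q. F a = b}. card (tails a))"
    using exists_heavy_fibre[OF finite_imageI[OF fQ] L(1,2,4), of "\<lambda>a. card (tails a)"] L(3) by auto
  define X where "X = {a\<in>hd ` Q. F a = b}"
  have X: "finite X" "X \<subseteq> V"
    using fQ hd_tails(1) by (auto simp: X_def)
  have X_sum: "(\<Sum>a\<in>X. card (tails a)) \<le> card X * (C * 2 ^ sum_list b)"
    using F by (intro sum_bounded_above[of X "\<lambda>a. card (tails a)" "C * 2 ^ sum_list b", simplified])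
      (force simp: X_def)
  have "X \<noteq> {}"
    using b fQ Suc.prems(1) unfolding X_def[symmetric] by (metis card_0_eq le_zero_eq mult_0_right sum.empty)
  moreover have "card X < 2 ^ Suc M" using card_mono[OF fV X(2)] card_V by linarith
  ultimately obtain e where "e \<le> M" and e: "2 ^ e \<le> card X" "card X < 2 ^ Suc e"
    using exists_dyadic_scale[OF X(1)] by blast
  have "\<forall>a\<in>X. branching V (tails a) (map ((^) 2) b)"
    using F by (auto simp: X_def)
  then have "branching V Q (map ((^) 2) (e # b))"
    using X(2) e(1) unfolding list.map branching.simps tails_def by blast
  have "card Q \<le> (M + 1) ^ k * (card X * (C * 2 ^ sum_list b))"
    using b X_sum unfolding X_def[symmetric] by (meson le_trans mult_le_mono2)
  also have "\<dots> \<le> (M + 1) ^ k * (2 ^ Suc e * (C * 2 ^ sum_list b))"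
    using e(2) by (intro mult_left_mono mult_right_mono) auto
  also have "\<dots> \<le> 2 ^ Suc k * (M + 1) ^ ((Suc k - 1)\<^sup>2) * 2 ^ sum_list (e # b)"
    unfolding C_def using dyadic_count_step by simp
  finally show ?case
    using \<open>b \<in> L\<close> \<open>e \<le> M\<close> \<open>branching V Q (map ((^) 2) (e # b))\<close>
    by (intro exI[of _ "e # b"]) (auto simp: L_def)
qed

lemma exists_list_le_sum_list_eq:
  fixes es :: "nat list"
  shows "L \<le> sum_list es \<Longrightarrow> \<exists>es'. list_all2 (\<le>) es' es \<and> sum_list es' = L"
proof (induction es arbitrary: L)
  case Nil
  then show ?case by simp
next
  case (Cons e es)
  have "L - min e L \<le> sum_list es" using Cons.prems by auto
  then obtain es' where "list_all2 (\<le>) es' es" "sum_list es' = L - min e L"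
    using Cons.IH by blast
  then show ?case by (intro exI[of _ "min e L # es'"]) auto
qed

lemma prod_list_map_power: "prod_list (map (\<lambda>e. c ^ e) es) = (c::'a::comm_monoid_mult) ^ sum_list es"
  by (induction es) (simp_all add: power_add)

lemma exists_Product_below:
  assumes "1 \<le> \<Lambda>" "\<Lambda> \<le> 2 ^ sum_list es"
  shows "\<exists>es'. list_all2 (\<le>) es' es \<and> map (\<lambda>e. (1/2::real) ^ e) es' \<in> Product (length es) \<Lambda>"
proof -
  define L where "L = nat \<lceil>log 2 \<Lambda>\<rceil>"
  have "0 \<le> log 2 \<Lambda>" using assms(1) by simp
  then have L: "log 2 \<Lambda> \<le> real L" "real L \<le> log 2 \<Lambda> + 1"
    unfolding L_def by linarith+
  have "log 2 \<Lambda> \<le> log 2 (2 ^ sum_list es)"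
    using assms by (subst log_le_cancel_iff) auto
  then have "L \<le> sum_list es"
    unfolding L_def by (simp add: log_nat_power nat_ceiling_le_eq)
  then obtain es' where es': "list_all2 (\<le>) es' es" "sum_list es' = L"
    using exists_list_le_sum_list_eq by blast
  have "\<Lambda> \<le> 2 ^ L"
  proof -
    have "\<Lambda> = 2 powr (log 2 \<Lambda>)" using assms(1) by simp
    also have "\<dots> \<le> 2 ^ L" using L(1) by (simp add: powr_realpow[symmetric])
    finally show ?thesis .
  qed
  have "prod_list (map (\<lambda>e. (1/2::real) ^ e) es') = (1/2) ^ L"
    unfolding prod_list_map_power es'(2) ..
  also have "\<dots> = 1 / 2 ^ L"
    by (simp add: power_one_over)
  also have "\<dots> \<le> 1 / \<Lambda>"
    using assms(1) \<open>\<Lambda> \<le> 2 ^ L\<close> by (intro divide_left_mono) auto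
  finally have "prod_list (map (\<lambda>e. (1/2::real) ^ e) es') \<le> 1 / \<Lambda>" .
  moreover have "real (es' ! i) \<le> log 2 \<Lambda> + 1" if "i < length es'" for i
    using elem_le_sum_list[OF that] es'(2) L(2) by linarith
  moreover have "length es' = length es" using es'(1) by (rule list_all2_lengthD)
  ultimately have "map (\<lambda>e. (1/2::real) ^ e) es' \<in> Product (length es) \<Lambda>"
    unfolding Product_def by auto
  with es'(1) show ?thesis by blast
qed

lemma prod_list_ge_power:
  fixes xs :: "'a::linordered_semidom list"
  assumes "0 \<le> c" "\<forall>x\<in>set xs. c \<le> x"
  shows "c ^ length xs \<le> prod_list xs"
  using assms by (induction xs) (auto intro: mult_mono order_trans)

lemma one_minus_pow_ge:
  fixes x :: real
  assumes "0 \<le> x" "x \<le> real m" "0 < m"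
  shows "x - x\<^sup>2 / 2 \<le> 1 - (1 - x / real m) ^ m"
proof -
  have "(1 - x / m) ^ m \<le> exp (- (x / m)) ^ m"
    using assms exp_ge_add_one_self[of "- (x / m)"] by (intro power_mono) (auto simp: field_simps)
  also have "\<dots> = exp (- x)"
    using assms(3) by (simp add: exp_of_nat_mult[symmetric])
  also have "\<dots> \<le> 1 - x + x\<^sup>2 / 2"
  proof -
    have pos: "0 < 1 + x + x\<^sup>2 / 2" using assms(1) by (simp add: add_pos_nonneg)
    have "(1 + x + x\<^sup>2 / 2) * (1 - x + x\<^sup>2 / 2) = 1 + x ^ 4 / 4"
      by (simp add: algebra_simps power2_eq_square power4_eq_xxxx)
    then have "1 \<le> (1 + x + x\<^sup>2 / 2) * (1 - x + x\<^sup>2 / 2)"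
      using assms(1) by simp
    then have "1 / (1 + x + x\<^sup>2 / 2) \<le> 1 - x + x\<^sup>2 / 2"
      using pos by (simp add: divide_le_eq mult.commute)
    moreover have "exp (- x) \<le> 1 / (1 + x + x\<^sup>2 / 2)"
      using exp_lower_Taylor_quadratic[OF assms(1)] pos by (simp add: exp_minus field_simps)
    ultimately show ?thesis by linarith
  qed
  finally show ?thesis by simp
qed

lemma dyadic_factor_ge:
  assumes "0 < h"
  shows "1 / real h - (1 / real h)\<^sup>2 / 2 \<le> 1 - (1 - (1/2) ^ e / real h) ^ (2 ^ e)"
proof -
  have "(1/2) ^ e / real h = (1 / real h) / real (2 ^ e)"
    by (simp add: power_one_over)
  moreover have "1 / real h \<le> real (2 ^ e)"
  proof -
    have "1 / real h \<le> 1" using assms by simp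
    also have "1 \<le> real (2 ^ e)" by simp
    finally show ?thesis .
  qed
  ultimately show ?thesis
    using one_minus_pow_ge[of "1 / real h" "2 ^ e"] by simp
qed

lemma exp_bound_le_factor_pow:
  assumes "3 \<le> h"
  shows "(1 - 1 / exp 1) ^ (h - 1) * (1 / real h ^ h) \<le> (1 / real h - (1 / real h)\<^sup>2 / 2) ^ h"
proof -
  have "1 / 3 \<le> 1 / exp (1::real)"
    using exp_le by (intro divide_left_mono) auto
  then have "(1 - 1 / exp 1) ^ (h - 1) \<le> (1 - 1 / exp (1::real)) ^ 2"
    using assms by (intro power_decreasing) auto
  also have "\<dots> \<le> (2 / 3) ^ 2"
    using \<open>1 / 3 \<le> 1 / exp 1\<close> by (intro power_mono) auto
  also have "\<dots> \<le> 1 + real h * (- 1 / (2 * real h))"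
    using assms by (simp add: power2_eq_square)
  also have "\<dots> \<le> (1 + (- 1 / (2 * real h))) ^ h"
    using assms by (intro Bernoulli_inequality) (simp add: field_simps)
  finally have "(1 - 1 / exp 1) ^ (h - 1) * (1 / real h ^ h) \<le> (1 - 1 / (2 * real h)) ^ h * (1 / real h ^ h)"
    by (intro mult_right_mono) auto
  also have "\<dots> = ((1 - 1 / (2 * real h)) * (1 / real h)) ^ h"
    by (simp only: power_mult_distrib power_one_over)
  also have "(1 - 1 / (2 * real h)) * (1 / real h) = 1 / real h - (1 / real h)\<^sup>2 / 2"
    using assms by (simp add: field_simps power2_eq_square)
  finally show ?thesis .
qed

section \<open>The discovery experiment\<close>

definition colour_keep :: "real list \<Rightarrow> nat \<Rightarrow> nat \<times> bool \<Rightarrow> real" where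
  "colour_keep p h x = (if snd x then p ! fst x else 1 - p ! fst x) / real h"

lemma prob_weights_colour_keep:
  assumes "0 < h" "\<forall>i<h. 0 \<le> p ! i \<and> p ! i \<le> 1"
  shows "prob_weights V ({0..<h} \<times> UNIV) (\<lambda>_. colour_keep p h)"
proof -
  have "sum (colour_keep p h) ({0..<h} \<times> UNIV) = (\<Sum>i<h. \<Sum>b\<in>UNIV. colour_keep p h (i, b))"
    by (simp add: sum.cartesian_product atLeast0LessThan)
  also have "\<dots> = 1"
    using assms(1) by (simp add: colour_keep_def UNIV_bool add_divide_distrib[symmetric])
  finally show ?thesis
    using assms by (auto simp: prob_weights_def colour_keep_def)
qed

lemma disc_prob_eq_prod_prob:
  assumes "finite V"
  shows "disc_prob E V h p v = prod_prob V ({0..<h} \<times> UNIV) (\<lambda>_. colour_keep p h)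
     (\<lambda>\<psi>. discovered E h (\<lambda>u\<in>V. fst (\<psi> u)) {u\<in>V. snd (\<psi> u)} v)"
proof -
  define split where "split \<psi> = ((\<lambda>u\<in>V. fst (\<psi> u)), {u\<in>V. snd (\<psi> u)})" for \<psi> :: "'a \<Rightarrow> nat \<times> bool"
  have bij: "bij_betw split (V \<rightarrow>\<^sub>E {0..<h} \<times> UNIV) ((V \<rightarrow>\<^sub>E {0..<h}) \<times> Pow V)"
    by (rule bij_betw_byWitness[where f' = "\<lambda>(\<phi>, S). \<lambda>u\<in>V. (\<phi> u, u \<in> S)"])
       (auto simp: split_def PiE_def Pi_def extensional_def fun_eq_iff)
  have weight: "(\<Prod>u\<in>V. colour_keep p h (\<psi> u)) =
      1 / real h ^ card V * (\<Prod>u\<in>S. p ! \<phi> u) * (\<Prod>u\<in>V - S. 1 - p ! \<phi> u)"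
    if "split \<psi> = (\<phi>, S)" for \<psi> \<phi> S
  proof -
    have S: "S = {u\<in>V. snd (\<psi> u)}" and \<phi>: "\<And>u. u \<in> V \<Longrightarrow> \<phi> u = fst (\<psi> u)"
      using that by (auto simp: split_def)
    have "(\<Prod>u\<in>V. colour_keep p h (\<psi> u)) =
        (\<Prod>u\<in>V. if snd (\<psi> u) then p ! fst (\<psi> u) else 1 - p ! fst (\<psi> u)) / real h ^ card V"
      by (simp add: colour_keep_def prod_dividef)
    also have "(\<Prod>u\<in>V. if snd (\<psi> u) then p ! fst (\<psi> u) else 1 - p ! fst (\<psi> u)) =
        (\<Prod>u\<in>S. p ! fst (\<psi> u)) * (\<Prod>u\<in>V - S. 1 - p ! fst (\<psi> u))"
    proof -
      have "V \<inter> {u. snd (\<psi> u)} = S" "V \<inter> - {u. snd (\<psi> u)} = V - S" unfolding S by auto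
      then show ?thesis
        using prod.If_cases[OF assms, of "\<lambda>u. snd (\<psi> u)" "\<lambda>u. p ! fst (\<psi> u)" "\<lambda>u. 1 - p ! fst (\<psi> u)"]
        by simp
    qed
    also have "\<dots> = (\<Prod>u\<in>S. p ! \<phi> u) * (\<Prod>u\<in>V - S. 1 - p ! \<phi> u)"
      using \<phi> S by simp
    finally show ?thesis by simp
  qed
  have "disc_prob E V h p v = (\<Sum>\<psi> \<in> V \<rightarrow>\<^sub>E {0..<h} \<times> UNIV. (\<lambda>(\<phi>, S).
      1 / real h ^ card V * (\<Prod>u\<in>S. p ! \<phi> u) * (\<Prod>u\<in>V - S. 1 - p ! \<phi> u) *
      (if discovered E h \<phi> S v then 1 else 0)) (split \<psi>))"
    unfolding disc_prob_def sum.cartesian_product sum.reindex_bij_betw[OF bij] ..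
  also have "\<dots> = prod_prob V ({0..<h} \<times> UNIV) (\<lambda>_. colour_keep p h)
      (\<lambda>\<psi>. discovered E h (\<lambda>u\<in>V. fst (\<psi> u)) {u\<in>V. snd (\<psi> u)} v)"
    unfolding prod_prob_def by (intro sum.cong refl) (auto simp: weight split_def)
  finally show ?thesis .
qed

lemma discovered_if_coloured_kept:
  assumes "cycle_list E V h ys" "v \<in> set ys" "map \<psi> ys = map (\<lambda>i. (i, True)) [0..<h]"
  shows "discovered E h (\<lambda>u\<in>V. fst (\<psi> u)) {u\<in>V. snd (\<psi> u)} v"
proof -
  have ys: "set ys \<subseteq> V" using assms(1) by (simp add: cycle_list_def)
  have "map (fst \<circ> \<psi>) ys = [0..<h]" "map (snd \<circ> \<psi>) ys = replicate h True"
    using arg_cong[OF assms(3), of "map fst"] arg_cong[OF assms(3), of "map snd"]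
    by (simp_all add: comp_def map_replicate_const)
  then have "inj_on (fst \<circ> \<psi>) (set ys)" "\<forall>u\<in>set ys. snd (\<psi> u)"
    by (metis distinct_map distinct_upt, metis in_set_replicate comp_apply image_eqI list.set_map)
  then have "inj_on (\<lambda>u\<in>V. fst (\<psi> u)) (set ys)" "cycle_list E {u\<in>V. snd (\<psi> u)} h ys"
    using assms(1) ys by (auto simp: inj_on_def cycle_list_def subset_iff)
  with assms(2) show ?thesis unfolding discovered_def by blast
qed

lemma disc_prob_ge_branching:
  assumes "finite V" "0 < h"
    and Q: "\<forall>ys\<in>Q. cycle_list E V h ys \<and> v \<in> set ys"
    and es: "length es = h" "branching V Q (map ((^) 2) es)"
  shows "(1 / real h - (1 / real h)\<^sup>2 / 2) ^ h \<le> disc_prob E V h (map (\<lambda>e. (1/2) ^ e) es) v"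
proof -
  define p where "p = map (\<lambda>e. (1/2::real) ^ e) es"
  define Om where "Om = {0..<h} \<times> (UNIV :: bool set)"
  define ts where "ts = map (\<lambda>i. (i, True)) [0..<h]"
  define r where "r x = p ! fst x / real h" for x :: "nat \<times> bool"
  have p: "\<forall>i<h. 0 \<le> p ! i \<and> p ! i \<le> 1"
    using es(1) by (simp add: p_def power_le_one)
  have \<rho>: "prob_weights V Om (\<lambda>_. colour_keep p h)"
    unfolding Om_def using assms(2) p by (rule prob_weights_colour_keep)
  define c where "c = 1 / real h - (1 / real h)\<^sup>2 / 2"
  define fs where "fs = map2 (\<lambda>t m. 1 - (1 - r t) ^ m) ts (map ((^) 2) es)"
  have "c \<le> x" if "x \<in> set fs" for x
    using that es(1) dyadic_factor_ge[OF assms(2)]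
    by (auto simp: in_set_conv_nth fs_def ts_def r_def p_def c_def)
  moreover have "0 \<le> c" "length fs = h"
    using assms(2) es(1) by (simp_all add: c_def fs_def ts_def field_simps power2_eq_square)
  ultimately have "c ^ h \<le> prod_list fs"
    using prod_list_ge_power[of c fs] by simp
  also have "\<dots> \<le> prod_prob V Om (\<lambda>_. colour_keep p h) (\<lambda>\<psi>. \<exists>ys\<in>Q. map \<psi> ys = ts)"
    unfolding fs_def using Q es \<rho> p assms(2)
    by (intro prod_prob_realize_ge[OF assms(1)])
       (auto simp: Om_def ts_def r_def colour_keep_def cycle_list_def distinct_map inj_on_def lower_bounded_def)
  also have "\<dots> \<le> prod_prob V Om (\<lambda>_. colour_keep p h)
      (\<lambda>\<psi>. discovered E h (\<lambda>u\<in>V. fst (\<psi> u)) {u\<in>V. snd (\<psi> u)} v)"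
    using Q by (intro prod_prob_mono[OF \<rho>]) (auto simp: ts_def intro: discovered_if_coloured_kept)
  also have "\<dots> = disc_prob E V h p v"
    unfolding Om_def by (rule disc_prob_eq_prod_prob[OF assms(1), symmetric])
  finally show ?thesis unfolding p_def c_def .
qed

lemma Union_cycle_edges_subset: "\<Union>(cycle_edges xs) \<subseteq> set xs"
  by (auto simp: cycle_edges_def intro!: nth_mem mod_less_divisor)

lemma t_count_le_card_cycle_lists:
  assumes "finite V"
  shows "t_count E V h v \<le> card {xs. cycle_list E V h xs \<and> v \<in> set xs}"
proof -
  let ?Q = "{xs. cycle_list E V h xs \<and> v \<in> set xs}"
  have "finite ?Q"
    by (rule finite_subset[OF _ finite_lists_length_eq[OF assms, of h]]) (auto simp: cycle_list_def)
  moreover have "{C \<in> h_cycles E V h. v \<in> \<Union>C} \<subseteq> cycle_edges ` ?Q"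
    using Union_cycle_edges_subset by (fastforce simp: h_cycles_def)
  ultimately have "t_count E V h v \<le> card (cycle_edges ` ?Q)"
    unfolding t_count_def by (intro card_mono) auto
  also have "\<dots> \<le> card ?Q"
    by (rule card_image_le[OF \<open>finite ?Q\<close>])
  finally show ?thesis .
qed

lemma dyadic_count_le_threshold:
  assumes "2 \<le> h" "2 \<le> n" "2 ^ M \<le> n"
  shows "2 ^ h * (real M + 1) ^ ((h - 1)\<^sup>2) \<le> 2 * real h ^ h * (2 * real h * log 2 (real n)) ^ ((h - 1)\<^sup>2)"
proof -
  have "real M \<le> log 2 (real n)" "1 \<le> log 2 (real n)"
    using le_log2_of_power[OF assms(3)] le_log2_of_power[of 1 n] assms(2) by simp_all
  then have "real M + 1 \<le> 1 * (2 * log 2 (real n))" by simp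
  also have "\<dots> \<le> real h * (2 * log 2 (real n))"
    using assms(1) \<open>1 \<le> log 2 (real n)\<close> by (intro mult_right_mono) auto
  finally have "(real M + 1) ^ ((h - 1)\<^sup>2) \<le> (2 * real h * log 2 (real n)) ^ ((h - 1)\<^sup>2)"
    by (intro power_mono) (auto simp: mult.assoc mult.left_commute)
  moreover have "(2::real) ^ h \<le> 2 * real h ^ h"
  proof -
    have "(2::real) ^ h \<le> real h ^ h" using assms(1) by (intro power_mono) auto
    moreover have "0 \<le> real h ^ h" by simp
    ultimately show ?thesis by linarith
  qed
  ultimately show ?thesis
    by (intro mult_mono) auto
qed

lemma exists_heavy_branching:
  fixes \<Lambda> :: real
  assumes "finite V" "2 \<le> card V" "2 \<le> h" "0 < \<Lambda>"
    and "\<forall>ys\<in>Q. length ys = h \<and> set ys \<subseteq> V"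
    and "\<Lambda> * (2 * real h * log 2 (real (card V))) ^ ((h - 1)\<^sup>2) * 2 / (1 / real h ^ h) \<le> card Q"
  shows "\<exists>es. length es = h \<and> branching V Q (map ((^) 2) es) \<and> \<Lambda> \<le> 2 ^ sum_list es"
proof -
  define K where "K = 2 * real h ^ h * (2 * real h * log 2 (real (card V))) ^ ((h - 1)\<^sup>2)"
  have card_Q: "\<Lambda> * K \<le> card Q"
    using assms(6) by (simp add: K_def mult_ac)
  obtain M where M: "2 ^ M \<le> card V" "card V < 2 ^ Suc M"
    using ex_power_ivl1[of 2 "card V"] assms(2) by auto
  have "0 < \<Lambda> * K"
    using assms(2-4) le_log2_of_power[of 1 "card V"] by (simp add: K_def)
  with card_Q have "Q \<noteq> {}" by (metis card.empty not_le of_nat_0)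
  then obtain es where es: "length es = h" "branching V Q (map ((^) 2) es)"
      "card Q \<le> 2 ^ h * (M + 1) ^ ((h - 1)\<^sup>2) * 2 ^ sum_list es"
    using exists_dyadic_branching[OF assms(1) M(2) _ assms(5)] by metis
  have "\<Lambda> * K \<le> real (2 ^ h * (M + 1) ^ ((h - 1)\<^sup>2) * 2 ^ sum_list es)"
    using card_Q es(3) by (meson of_nat_le_iff order_trans)
  also have "\<dots> = 2 ^ h * (real M + 1) ^ ((h - 1)\<^sup>2) * 2 ^ sum_list es"
    by (simp add: add.commute)
  also have "\<dots> \<le> K * 2 ^ sum_list es"
    using dyadic_count_le_threshold[OF assms(3,2) M(1)] unfolding K_def
    by (intro mult_right_mono) auto
  finally have "\<Lambda> \<le> 2 ^ sum_list es"
    using \<open>0 < \<Lambda> * K\<close> assms(4) by (simp add: mult.commute zero_less_mult_iff)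
  with es(1,2) show ?thesis by blast
qed

theorem proposition4:
  fixes V :: "'a set" and E :: "'a \<Rightarrow> 'a \<Rightarrow> bool" and h :: nat and \<Lambda> :: real and v :: 'a
  assumes "finite V"
    and "\<And>x y. E x y \<Longrightarrow> E y x"
    and "\<And>x. \<not> E x x"
    and "\<And>x y. E x y \<Longrightarrow> x \<in> V \<and> y \<in> V"
    and "3 \<le> h"
    and "1 \<le> \<Lambda>"
    and "card V \<ge> 2"
    and "v \<in> V"
    and "real (t_count E V h v) \<ge>
           \<Lambda> * (2 * real h * log 2 (real (card V))) ^ ((h - 1)^2) * 2 / (1 / real h ^ h)"
  shows "\<exists>p \<in> Product h \<Lambda>. disc_prob E V h p v \<ge> (1 - 1 / exp 1) ^ (h - 1) * (1 / real h ^ h)"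
proof -
  define Q where "Q = {xs. cycle_list E V h xs \<and> v \<in> set xs}"
  have Q: "\<forall>ys\<in>Q. length ys = h \<and> set ys \<subseteq> V" by (simp add: Q_def cycle_list_def)
  have "2 \<le> h" "0 < \<Lambda>" using assms(5,6) by auto
  moreover have "\<Lambda> * (2 * real h * log 2 (real (card V))) ^ ((h - 1)\<^sup>2) * 2 / (1 / real h ^ h) \<le> card Q"
    using assms(9) t_count_le_card_cycle_lists[OF assms(1), of E h v] unfolding Q_def by linarith
  ultimately obtain es where es: "length es = h" "branching V Q (map ((^) 2) es)" "\<Lambda> \<le> 2 ^ sum_list es"
    using exists_heavy_branching[OF assms(1,7) _ _ Q] by metis
  then obtain es' where es': "list_all2 (\<le>) es' es" and P: "map (\<lambda>e. (1/2) ^ e) es' \<in> Product h \<Lambda>"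
    using exists_Product_below[OF assms(6)] by metis
  have "list_all2 (\<le>) (map ((^) 2) es') (map ((^) (2::nat)) es)"
    using es' by (auto simp: list_all2_map1 list_all2_map2 power_increasing elim!: list_all2_mono)
  then have "branching V Q (map ((^) 2) es')"
    using es(2) branching_mono by blast
  then have "(1 / real h - (1 / real h)\<^sup>2 / 2) ^ h \<le> disc_prob E V h (map (\<lambda>e. (1/2) ^ e) es') v"
    using assms(1,5) es(1) list_all2_lengthD[OF es'] by (intro disc_prob_ge_branching) (auto simp: Q_def)
  then show ?thesis
    using P exp_bound_le_factor_pow[OF assms(5)] by (meson order_trans)
qed

end
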